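(* Let $a,b$ be real with $0<a<a+b<1$. If $a+b>1/2$ then \[ \frac{\Gamma(a+b)}{\Gamma(a+2b)}<\frac{\Gamma(1-a-b)}{\Gamma(1-a)}, \] and if $a+b<1/2$ the reverse strict inequality holds.
   Context: $\Gamma$ denotes the Euler gamma function. *)

theory Defs
  imports "HOL-Analysis.Analysis"
begin

end

theory Submission
  imports Defs
begin

(* Since the digamma function is strictly increasing, ln Gamma (x + b) - ln Gamma x is strictly
   increasing in x > 0 for every b > 0, i.e. Gamma x / Gamma (x + b) is strictly decreasing.
   Both sides of the inequalities are such ratios with shift b, taken at x = a + b and at
   x = 1 - a - b, and a + b > 1/2 holds exactly when a + b exceeds 1 - a - b. *)

lemma ln_Gamma_shift_diff_strict_mono:
  fixes x y b :: real
  assumes "0 < x" "x < y" "0 < b"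
  shows "ln_Gamma (x + b) - ln_Gamma x < ln_Gamma (y + b) - ln_Gamma y"
proof -
  have "(\<lambda>t. ln_Gamma (t + b) - ln_Gamma t) x < (\<lambda>t. ln_Gamma (t + b) - ln_Gamma t) y"
  proof (rule DERIV_pos_imp_increasing[OF \<open>x < y\<close>])
    fix t assume "x \<le> t" "t \<le> y"
    with assms have "t > 0" by simp
    with assms have "((\<lambda>t. ln_Gamma (t + b) - ln_Gamma t) has_field_derivative
        (Digamma (t + b) - Digamma t)) (at t)"
      by (auto intro!: derivative_eq_intros)
    moreover have "Digamma (t + b) - Digamma t > 0"
      using Digamma_real_strict_mono[of t "t + b"] \<open>t > 0\<close> assms by simp
    ultimately show "\<exists>d. ((\<lambda>t. ln_Gamma (t + b) - ln_Gamma t) has_field_derivative d) (at t) \<and> d > 0"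
      by blast
  qed
  then show ?thesis by simp
qed

lemma Gamma_shift_ratio_strict_antimono:
  fixes x y b :: real
  assumes "0 < x" "x < y" "0 < b"
  shows "Gamma y / Gamma (y + b) < Gamma x / Gamma (x + b)"
proof -
  have ratio_exp: "Gamma t / Gamma (t + b) = exp (- (ln_Gamma (t + b) - ln_Gamma t))"
    if "0 < t" for t :: real
    using that assms by (simp add: Gamma_real_pos_exp exp_diff)
  show ?thesis
    using ln_Gamma_shift_diff_strict_mono[OF assms] assms by (simp add: ratio_exp)
qed

theorem lemma2:
  fixes a b :: real
  assumes "0 < a" and "a < a + b" and "a + b < 1"
  shows "(a + b > 1/2 \<longrightarrow> Gamma (a + b) / Gamma (a + 2*b) < Gamma (1 - a - b) / Gamma (1 - a))
       \<and> (a + b < 1/2 \<longrightarrow> Gamma (a + b) / Gamma (a + 2*b) > Gamma (1 - a - b) / Gamma (1 - a))"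
proof -
  have "0 < b" using assms by simp
  have "a + 2*b = (a + b) + b" "1 - a = (1 - a - b) + b" by simp_all
  then have ratios: "Gamma (a + b) / Gamma (a + 2*b) = Gamma (a + b) / Gamma ((a + b) + b)"
    "Gamma (1 - a - b) / Gamma (1 - a) = Gamma (1 - a - b) / Gamma ((1 - a - b) + b)"
    by (simp_all only:)
  show ?thesis
    unfolding ratios
    using Gamma_shift_ratio_strict_antimono[of "1 - a - b" "a + b" b]
          Gamma_shift_ratio_strict_antimono[of "a + b" "1 - a - b" b] assms \<open>0 < b\<close>
    by auto
qed

end
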